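(* Under the same setting as follows — $0<\gamma\le L$, $\alpha\in(0,2/L)$, $\mathcal{X}\subseteq\mathbb{R}^M$ nonempty closed convex, for each $t\ge0$ a nonempty closed convex $\mathcal{X}_t\subseteq\mathcal{X}$ and a differentiable $f_t:\mathbb{R}^M\to\mathbb{R}$ that is $L$-smooth and $\gamma$-strongly convex on $\mathcal{X}$, $\mathbf{x}_t^*:=\arg\min_{\mathbf{x}\in\mathcal{X}_t}f_t(\mathbf{x})$, $r_t:=\|\mathbf{x}_{t-1}^*-\mathbf{x}_t^*\|$, $\mathbf{x}_0\in\mathcal{X}_0$, arbitrary error vectors $\mathbf{e}_t\in\mathbb{R}^M$, and iterates $\mathbf{x}_t=\mathrm{proj}_{\mathcal{X}_t}\{\mathbf{x}_{t-1}-\alpha(\nabla f_t(\mathbf{x}_{t-1})+\mathbf{e}_t)\}$ for $t\ge1$ — define $\rho:=\max\{|1-\alpha\gamma|,|1-\alpha L|\}$, the path length $\omega_T:=\sum_{t=1}^T r_t$ and the cumulative gradient error $E_T:=\sum_{t=1}^T\|\mathbf{e}_t\|$. Then for every $T\ge1$, $$\sum_{t=1}^T\|\mathbf{x}_t-\mathbf{x}_t^*\|\le\frac{1}{1-\rho}\Big[\rho\|\mathbf{x}_0-\mathbf{x}_0^*\|+\rho\,\omega_T+\alpha E_T\Big].$$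
   Context: $\mathrm{proj}_{\mathcal{X}}\{\mathbf{y}\}:=\arg\min_{\mathbf{x}\in\mathcal{X}}\|\mathbf{x}-\mathbf{y}\|^2$ denotes Euclidean projection; $\|\cdot\|$ is the Euclidean norm. Note $\rho<1$ under the stated assumptions. *)

theory Defs
  imports "HOL-Analysis.Analysis"
begin

text \<open>Euclidean projection onto a nonempty closed convex set: library closest_point.\<close>

definition is_gradient :: "('a::real_inner \<Rightarrow> real) \<Rightarrow> ('a \<Rightarrow> 'a) \<Rightarrow> bool" where
  "is_gradient f g \<longleftrightarrow> (\<forall>x. (f has_derivative (\<lambda>h. g x \<bullet> h)) (at x))"

definition L_smooth_on :: "real \<Rightarrow> 'a::real_inner set \<Rightarrow> ('a \<Rightarrow> 'a) \<Rightarrow> bool" where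
  "L_smooth_on L X g \<longleftrightarrow> (\<forall>x\<in>X. \<forall>y\<in>X. norm (g x - g y) \<le> L * norm (x - y))"

definition strongly_convex_on :: "real \<Rightarrow> 'a::real_inner set \<Rightarrow> ('a \<Rightarrow> real) \<Rightarrow> ('a \<Rightarrow> 'a) \<Rightarrow> bool" where
  "strongly_convex_on \<gamma> X f g \<longleftrightarrow>
     (\<forall>x\<in>X. \<forall>y\<in>X. f y \<ge> f x + g x \<bullet> (y - x) + \<gamma> / 2 * (norm (y - x))\<^sup>2)"

definition is_argmin_on :: "('a \<Rightarrow> real) \<Rightarrow> 'a set \<Rightarrow> 'a \<Rightarrow> bool" where
  "is_argmin_on f S x \<longleftrightarrow> x \<in> S \<and> (\<forall>y\<in>S. f x \<le> f y)"

end

theory Submission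
  imports Defs
begin

text \<open>
  The tracking error obeys the one-step bound
  \<open>\<parallel>x\<^sub>t - x\<^sub>t\<^sup>*\<parallel> \<le> \<rho> \<parallel>x\<^sub>t\<^sub>-\<^sub>1 - x\<^sub>t\<^sup>*\<parallel> + \<alpha> \<parallel>e\<^sub>t\<parallel>\<close>:
  combine the obtuse-angle property of the projection onto \<open>X\<^sub>t\<close> with the first-order
  optimality of \<open>x\<^sub>t\<^sup>*\<close>, and use that the gradient step \<open>x \<mapsto> x - \<alpha> \<nabla>f\<^sub>t x\<close> is a
  \<open>\<rho>\<close>-contraction when tested against differences of points of \<open>X\<close>. The triangle inequality
  through \<open>x\<^sub>t\<^sub>-\<^sub>1\<^sup>*\<close> and summation of the resulting linear recursion give the bound.

  The contraction is the delicate part, because \<open>f\<^sub>t\<close> is smooth and strongly convex only on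
  \<open>X\<close>, while the usual proof of co-coercivity of \<open>\<nabla>h\<close> for \<open>h = f\<^sub>t - \<gamma>/2 \<parallel>\<cdot>\<parallel>\<^sup>2\<close>
  evaluates \<open>h\<close> outside \<open>X\<close>. Instead, a two-point inequality is proved around midpoints
  having room in the test direction, telescoped along segments in the relative interior, and
  extended to the relative boundary by continuity.
\<close>

lemma is_gradient_along_line:
  assumes "is_gradient f g"
  shows "((\<lambda>s. f (z + s *\<^sub>R w)) has_real_derivative g (z + s *\<^sub>R w) \<bullet> w) (at s)"
proof -
  have "((\<lambda>s. z + s *\<^sub>R w) has_derivative (\<lambda>h. h *\<^sub>R w)) (at s)"
    by (auto intro!: derivative_eq_intros)
  from has_derivative_compose[OF this] assms
  have "((\<lambda>s. f (z + s *\<^sub>R w)) has_derivative (\<lambda>h. g (z + s *\<^sub>R w) \<bullet> (h *\<^sub>R w))) (at s)"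
    unfolding is_gradient_def by blast
  then show ?thesis
    by (simp add: has_field_derivative_def mult_commute_abs)
qed

lemma L_smooth_on_descent:
  fixes f :: "'a::real_inner \<Rightarrow> real"
  assumes grad: "is_gradient f g" and smooth: "L_smooth_on L X g" and "convex X"
    and z: "z \<in> X" and zw: "z + w \<in> X"
  shows "f (z + w) \<le> f z + g z \<bullet> w + L / 2 * (norm w)\<^sup>2"
proof -
  define q where "q s = f (z + s *\<^sub>R w) - s * (g z \<bullet> w) - L / 2 * s\<^sup>2 * (norm w)\<^sup>2" for s
  have "q 1 \<le> q 0"
  proof (rule DERIV_nonpos_imp_nonincreasing[of 0 1 q])
    fix s :: real assume s: "0 \<le> s" "s \<le> 1"
    have "(1 - s) *\<^sub>R z + s *\<^sub>R (z + w) \<in> X"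
      using convexD_alt[OF \<open>convex X\<close> z zw] s by blast
    then have zs: "z + s *\<^sub>R w \<in> X"
      by (simp add: algebra_simps)
    have "(g (z + s *\<^sub>R w) - g z) \<bullet> w \<le> norm (g (z + s *\<^sub>R w) - g z) * norm w"
      by (rule norm_cauchy_schwarz)
    also have "\<dots> \<le> L * norm (s *\<^sub>R w) * norm w"
      using smooth zs z unfolding L_smooth_on_def by (intro mult_right_mono) force+
    also have "\<dots> = L * s * (norm w)\<^sup>2"
      using s by (simp add: power2_eq_square)
    finally have "g (z + s *\<^sub>R w) \<bullet> w - g z \<bullet> w - L / 2 * (2 * s) * (norm w)\<^sup>2 \<le> 0"
      by (simp add: inner_diff_left)
    moreover have "DERIV q s :> g (z + s *\<^sub>R w) \<bullet> w - g z \<bullet> w - L / 2 * (2 * s) * (norm w)\<^sup>2"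
      unfolding q_def[abs_def]
      by (auto intro!: derivative_eq_intros is_gradient_along_line[OF grad])
    ultimately show "\<exists>y. DERIV q s :> y \<and> y \<le> 0"
      by blast
  qed simp
  then show ?thesis
    by (simp add: q_def)
qed

lemma is_argmin_on_variational_inequality:
  assumes grad: "is_gradient f g" and "convex S" and min: "is_argmin_on f S xs" and y: "y \<in> S"
  shows "g xs \<bullet> (y - xs) \<ge> 0"
proof (rule ccontr)
  assume "\<not> ?thesis"
  then obtain d where "d > 0" and descent: "\<And>h. 0 < h \<Longrightarrow> h < d \<Longrightarrow> f (xs + h *\<^sub>R (y - xs)) < f xs"
    using DERIV_neg_dec_right[OF is_gradient_along_line[OF grad, of xs "y - xs" 0]] by auto
  define h where "h = min (d / 2) 1"
  have "0 < h" "h < d" "h \<le> 1"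
    using \<open>d > 0\<close> by (auto simp: h_def)
  have "xs \<in> S"
    using min unfolding is_argmin_on_def by blast
  have "(1 - h) *\<^sub>R xs + h *\<^sub>R y \<in> S"
    using convexD_alt[OF \<open>convex S\<close> \<open>xs \<in> S\<close> y] \<open>0 < h\<close> \<open>h \<le> 1\<close> by simp
  then have "f xs \<le> f (xs + h *\<^sub>R (y - xs))"
    using min unfolding is_argmin_on_def by (simp add: algebra_simps)
  with descent[OF \<open>0 < h\<close> \<open>h < d\<close>] show False
    by simp
qed

lemma L_smooth_on_continuous_on:
  assumes "L_smooth_on L X g"
  shows "continuous_on X g"
proof (rule lipschitz_on_continuous_on)
  show "\<bar>L\<bar>-lipschitz_on X g"
  proof (rule lipschitz_onI)
    fix x y assume "x \<in> X" "y \<in> X"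
    then have "dist (g x) (g y) \<le> L * dist x y"
      using assms unfolding L_smooth_on_def dist_norm by blast
    also have "\<dots> \<le> \<bar>L\<bar> * dist x y"
      by (simp add: mult_right_mono)
    finally show "dist (g x) (g y) \<le> \<bar>L\<bar> * dist x y" .
  qed simp
qed

lemma strongly_convex_on_shifted_lower:
  assumes "strongly_convex_on \<gamma> X f g" and "x \<in> X" and "z \<in> X"
  shows "f x - \<gamma> / 2 * (norm x)\<^sup>2 + (g x - \<gamma> *\<^sub>R x) \<bullet> (z - x) \<le> f z - \<gamma> / 2 * (norm z)\<^sup>2"
proof -
  have "f x + g x \<bullet> (z - x) + \<gamma> / 2 * (norm (z - x))\<^sup>2 \<le> f z"
    using assms unfolding strongly_convex_on_def by blast
  moreover have "(norm (z - x))\<^sup>2 = (norm z)\<^sup>2 - 2 * (x \<bullet> z) + (norm x)\<^sup>2"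
    by (simp add: power2_norm_eq_inner inner_diff_left inner_diff_right inner_commute)
  moreover have "(g x - \<gamma> *\<^sub>R x) \<bullet> (z - x) = g x \<bullet> (z - x) - \<gamma> * (x \<bullet> z) + \<gamma> * (norm x)\<^sup>2"
    by (simp add: power2_norm_eq_inner inner_diff_left inner_diff_right inner_commute algebra_simps)
  ultimately show ?thesis
    by (simp add: algebra_simps dot_square_norm)
qed

lemma L_smooth_on_shifted_upper:
  fixes f :: "'a::real_inner \<Rightarrow> real"
  assumes "is_gradient f g" and "L_smooth_on L X g" and "convex X" and "z \<in> X" and "z + w \<in> X"
  shows "f (z + w) - \<gamma> / 2 * (norm (z + w))\<^sup>2
    \<le> f z - \<gamma> / 2 * (norm z)\<^sup>2 + (g z - \<gamma> *\<^sub>R z) \<bullet> w + (L - \<gamma>) / 2 * (norm w)\<^sup>2"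
proof -
  have "f (z + w) \<le> f z + g z \<bullet> w + L / 2 * (norm w)\<^sup>2"
    by (rule L_smooth_on_descent[OF assms])
  moreover have "(norm (z + w))\<^sup>2 = (norm z)\<^sup>2 + 2 * (z \<bullet> w) + (norm w)\<^sup>2"
    by (simp add: power2_norm_eq_inner inner_add_left inner_add_right inner_commute)
  ultimately show ?thesis
    by (simp add: inner_diff_left field_simps)
qed

text \<open>For \<open>h = f - \<gamma>/2 \<parallel>\<cdot>\<parallel>\<^sup>2\<close>, with gradient \<open>g - \<gamma> id\<close>, non-positivity of this defect
  for all \<open>v \<in> X - X\<close> is the substitute for co-coercivity of \<open>\<nabla>h\<close> with constant \<open>L - \<gamma>\<close>.\<close>
definition grad_defect :: "('a::real_inner \<Rightarrow> 'a) \<Rightarrow> real \<Rightarrow> real \<Rightarrow> 'a \<Rightarrow> 'a \<Rightarrow> 'a \<Rightarrow> real" where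
  "grad_defect g \<gamma> K x y v =
     ((g x - \<gamma> *\<^sub>R x) - (g y - \<gamma> *\<^sub>R y)) \<bullet> v - K / 2 * ((x - y) \<bullet> v) - K / 2 * norm (x - y) * norm v"

lemma grad_defect_scaleR: "0 \<le> c \<Longrightarrow> grad_defect g \<gamma> K x y (c *\<^sub>R v) = c * grad_defect g \<gamma> K x y v"
  by (simp add: grad_defect_def algebra_simps)

lemma grad_defect_zero [simp]: "grad_defect g \<gamma> K x y 0 = 0" "grad_defect g \<gamma> K x x v = 0"
  by (simp_all add: grad_defect_def)

lemma shifted_gradient_pair_bound:
  fixes f :: "'a::real_inner \<Rightarrow> real"
  assumes grad: "is_gradient f g" and smooth: "L_smooth_on L X g" and "convex X"
    and sc: "strongly_convex_on \<gamma> X f g"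
    and x: "x \<in> X" and y: "y \<in> X" and yw: "y + w \<in> X" and xw: "x - w \<in> X"
  shows "2 * (((g x - \<gamma> *\<^sub>R x) - (g y - \<gamma> *\<^sub>R y)) \<bullet> w) - (L - \<gamma>) * (norm w)\<^sup>2
    \<le> ((g x - \<gamma> *\<^sub>R x) - (g y - \<gamma> *\<^sub>R y)) \<bullet> (x - y)"
proof -
  define h where "h z = f z - \<gamma> / 2 * (norm z)\<^sup>2" for z
  define Gx where "Gx = g x - \<gamma> *\<^sub>R x"
  define Gy where "Gy = g y - \<gamma> *\<^sub>R y"
  have "h x + Gx \<bullet> (y + w - x) \<le> h (y + w)"
    using strongly_convex_on_shifted_lower[OF sc x yw] unfolding h_def Gx_def .
  moreover have "h (y + w) \<le> h y + Gy \<bullet> w + (L - \<gamma>) / 2 * (norm w)\<^sup>2"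
    using L_smooth_on_shifted_upper[OF grad smooth \<open>convex X\<close> y yw] unfolding h_def Gy_def .
  moreover have "h y + Gy \<bullet> (x - w - y) \<le> h (x - w)"
    using strongly_convex_on_shifted_lower[OF sc y xw] unfolding h_def Gy_def .
  moreover have "h (x + - w) \<le> h x + Gx \<bullet> (- w) + (L - \<gamma>) / 2 * (norm (- w))\<^sup>2"
    using L_smooth_on_shifted_upper[OF grad smooth \<open>convex X\<close> x, of "- w" \<gamma>] xw unfolding h_def Gx_def by simp
  ultimately have "2 * ((Gx - Gy) \<bullet> w) - (L - \<gamma>) * (norm w)\<^sup>2 \<le> (Gx - Gy) \<bullet> (x - y)"
    by (simp add: inner_simps)
  then show ?thesis
    unfolding Gx_def Gy_def .
qed

lemma grad_defect_nonpos_local: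
  fixes f :: "'a::real_inner \<Rightarrow> real"
  assumes grad: "is_gradient f g" and smooth: "L_smooth_on L X g" and "convex X"
    and sc: "strongly_convex_on \<gamma> X f g" and x: "x \<in> X" and y: "y \<in> X"
    and u: "norm u = norm (x - y) / 2"
    and plus: "(1/2) *\<^sub>R (x + y) + u \<in> X" and minus: "(1/2) *\<^sub>R (x + y) - u \<in> X"
  shows "grad_defect g \<gamma> (L - \<gamma>) x y u \<le> 0"
proof -
  define w where "w = (1/2) *\<^sub>R (x - y) + u"
  define U where "U = (g x - \<gamma> *\<^sub>R x) - (g y - \<gamma> *\<^sub>R y)"
  define K where "K = L - \<gamma>"
  define n where "n = norm (x - y)"
  have "y + w = (1/2) *\<^sub>R (x + y) + u" "x - w = (1/2) *\<^sub>R (x + y) - u"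
    unfolding w_def by (simp_all add: algebra_simps flip: scaleR_2)
  then have "2 * (U \<bullet> w) - K * (norm w)\<^sup>2 \<le> U \<bullet> (x - y)"
    using shifted_gradient_pair_bound[OF grad smooth \<open>convex X\<close> sc x y, of w] plus minus
    unfolding U_def K_def by simp
  moreover have "(norm w)\<^sup>2 = n\<^sup>2 / 2 + (x - y) \<bullet> u"
  proof -
    have "(norm w)\<^sup>2 = n\<^sup>2 / 4 + (x - y) \<bullet> u + (norm u)\<^sup>2"
      unfolding w_def n_def by (simp add: power2_norm_eq_inner inner_simps inner_commute)
    moreover have "(norm u)\<^sup>2 = n\<^sup>2 / 4"
      unfolding u n_def by (simp add: power2_eq_square)
    ultimately show ?thesis
      by simp
  qed
  moreover have "2 * (U \<bullet> w) = U \<bullet> (x - y) + 2 * (U \<bullet> u)"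
    unfolding w_def by (simp add: inner_add_right)
  ultimately have "2 * (U \<bullet> u) \<le> K * (n\<^sup>2 / 2 + (x - y) \<bullet> u)"
    by simp
  moreover have "n\<^sup>2 / 2 = n * norm u"
    unfolding u n_def by (simp add: power2_eq_square)
  ultimately have "U \<bullet> u \<le> K / 2 * ((x - y) \<bullet> u) + K / 2 * n * norm u"
    by (simp add: algebra_simps)
  then show ?thesis
    unfolding grad_defect_def U_def K_def n_def by simp
qed

lemma grad_defect_telescope:
  fixes x y :: "'a::real_inner"
  assumes "N > 0"
  defines "z \<equiv> \<lambda>i. y + (real i / real N) *\<^sub>R (x - y)"
  shows "grad_defect g \<gamma> K x y v = (\<Sum>i<N. grad_defect g \<gamma> K (z (Suc i)) (z i) v)"
proof -
  define \<phi> where "\<phi> i = (g (z i) - \<gamma> *\<^sub>R z i) \<bullet> v" for i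
  define c where "c = K / 2 * ((x - y) \<bullet> v) + K / 2 * norm (x - y) * norm v"
  have step: "z (Suc i) - z i = (1 / real N) *\<^sub>R (x - y)" for i
    unfolding z_def by (simp add: algebra_simps add_divide_distrib flip: scaleR_diff_left)
  have "grad_defect g \<gamma> K (z (Suc i)) (z i) v = (\<phi> (Suc i) - \<phi> i) - c / real N" for i
    unfolding grad_defect_def \<phi>_def c_def step
    using assms by (simp add: inner_diff_left divide_simps)
  then have "(\<Sum>i<N. grad_defect g \<gamma> K (z (Suc i)) (z i) v) = \<phi> N - \<phi> 0 - c"
    using \<open>N > 0\<close> sum_lessThan_telescope[of \<phi> N] by (simp add: sum_subtractf)
  also have "\<dots> = grad_defect g \<gamma> K x y v"
    using \<open>N > 0\<close> unfolding \<phi>_def c_def grad_defect_def z_def by (simp add: inner_diff_left)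
  finally show ?thesis ..
qed

lemma grad_defect_nonpos_with_room:
  fixes f :: "'a::real_inner \<Rightarrow> real"
  assumes grad: "is_gradient f g" and smooth: "L_smooth_on L X g" and "convex X"
    and sc: "strongly_convex_on \<gamma> X f g" and "r > 0"
    and room: "\<And>c. \<bar>c\<bar> * norm v < r \<Longrightarrow> x + c *\<^sub>R v \<in> X \<and> y + c *\<^sub>R v \<in> X"
  shows "grad_defect g \<gamma> (L - \<gamma>) x y v \<le> 0"
proof (cases "v = 0 \<or> x = y")
  case True
  then show ?thesis
    by auto
next
  case False
  define n where "n = norm (x - y)"
  have "n > 0" "norm v > 0"
    using False by (auto simp: n_def)
  obtain N :: nat where "n / r < N"
    using reals_Archimedean2 by blast
  moreover have "0 < n / r"
    using \<open>n > 0\<close> \<open>r > 0\<close> by simp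
  ultimately have "N > 0"
    by linarith
  with \<open>n / r < N\<close> \<open>r > 0\<close> have short: "n / N < r"
    by (simp add: field_simps)
  define z where "z i = y + (real i / real N) *\<^sub>R (x - y)" for i
  have segment: "y + l *\<^sub>R (x - y) + c *\<^sub>R v \<in> X" if "0 \<le> l" "l \<le> 1" "\<bar>c\<bar> * norm v < r" for l c
  proof -
    have "(1 - l) *\<^sub>R (y + c *\<^sub>R v) + l *\<^sub>R (x + c *\<^sub>R v) \<in> X"
      using convexD_alt[OF \<open>convex X\<close>] room[OF that(3)] that(1,2) by blast
    then show ?thesis
      by (simp add: algebra_simps)
  qed
  have "grad_defect g \<gamma> (L - \<gamma>) (z (Suc i)) (z i) v \<le> 0" if "i < N" for i
  proof -
    define c where "c = n / (2 * N * norm v)"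
    have "c > 0" "\<bar>c\<bar> * norm v < r"
      using \<open>n > 0\<close> \<open>norm v > 0\<close> \<open>N > 0\<close> short by (simp_all add: c_def field_simps)
    have "norm (z (Suc i) - z i) = n / N"
      unfolding z_def n_def by (simp add: add_divide_distrib flip: scaleR_diff_left)
    then have u: "norm (c *\<^sub>R v) = norm (z (Suc i) - z i) / 2"
      using \<open>n > 0\<close> \<open>norm v > 0\<close> by (simp add: c_def)
    define l where "l = (2 * real i + 1) / (2 * N)"
    have "0 \<le> l" "l \<le> 1"
      using \<open>i < N\<close> by (auto simp: l_def field_simps)
    have mid: "(1/2) *\<^sub>R (z (Suc i) + z i) = y + l *\<^sub>R (x - y)"
    proof -
      have "z (Suc i) + z i = 2 *\<^sub>R y + (real (Suc i) / N + real i / N) *\<^sub>R (x - y)"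
        unfolding z_def by (simp add: scaleR_add_left scaleR_2 algebra_simps)
      moreover have "(real (Suc i) / N + real i / N) / 2 = l"
        using \<open>N > 0\<close> unfolding l_def by (simp add: field_simps)
      ultimately show ?thesis
        by (simp add: scaleR_add_right)
    qed
    have "z j \<in> X" if "j \<le> N" for j
      using segment[of "real j / N" 0] that \<open>N > 0\<close> \<open>r > 0\<close> unfolding z_def by simp
    moreover have "(1/2) *\<^sub>R (z (Suc i) + z i) + c *\<^sub>R v \<in> X"
      unfolding mid using segment \<open>0 \<le> l\<close> \<open>l \<le> 1\<close> \<open>\<bar>c\<bar> * norm v < r\<close> by blast
    moreover have "(1/2) *\<^sub>R (z (Suc i) + z i) - c *\<^sub>R v \<in> X"
      unfolding mid using segment[of l "- c"] \<open>0 \<le> l\<close> \<open>l \<le> 1\<close> \<open>\<bar>c\<bar> * norm v < r\<close> by simp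
    ultimately have "grad_defect g \<gamma> (L - \<gamma>) (z (Suc i)) (z i) (c *\<^sub>R v) \<le> 0"
      using grad_defect_nonpos_local[OF grad smooth \<open>convex X\<close> sc _ _ u] \<open>i < N\<close> by simp
    then show ?thesis
      using \<open>c > 0\<close> by (simp add: grad_defect_scaleR mult_le_0_iff)
  qed
  then show ?thesis
    unfolding grad_defect_telescope[OF \<open>N > 0\<close>, of g \<gamma> "L - \<gamma>" x y v, folded z_def]
    by (auto intro: sum_nonpos)
qed

lemma rel_interior_room_along:
  fixes X :: "'a::euclidean_space set"
  assumes "z \<in> rel_interior X" and "p \<in> X" and "q \<in> X"
  obtains r where "r > 0" and "\<And>c. \<bar>c\<bar> * norm (p - q) < r \<Longrightarrow> z + c *\<^sub>R (p - q) \<in> X"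
proof -
  obtain r where "r > 0" and ball: "ball z r \<inter> affine hull X \<subseteq> X"
    using assms(1) unfolding mem_rel_interior_ball by blast
  have "z + c *\<^sub>R (p - q) \<in> X" if "\<bar>c\<bar> * norm (p - q) < r" for c
  proof -
    have "z + c *\<^sub>R (p - q) \<in> affine hull X"
      using assms rel_interior_subset hull_subset[of X affine]
      by (intro mem_affine_3_minus affine_affine_hull) auto
    moreover have "z + c *\<^sub>R (p - q) \<in> ball z r"
      using that by (simp add: dist_norm)
    ultimately show ?thesis
      using ball by blast
  qed
  with \<open>r > 0\<close> show ?thesis
    using that by blast
qed

lemma grad_defect_nonpos:
  fixes f :: "'a::euclidean_space \<Rightarrow> real"
  assumes grad: "is_gradient f g" and smooth: "L_smooth_on L X g" and "convex X"
    and sc: "strongly_convex_on \<gamma> X f g"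
    and x: "x \<in> X" and y: "y \<in> X" and p: "p \<in> X" and q: "q \<in> X"
  shows "grad_defect g \<gamma> (L - \<gamma>) x y (p - q) \<le> 0"
proof -
  obtain c where c: "c \<in> rel_interior X"
    using rel_interior_eq_empty[OF \<open>convex X\<close>] x by blast
  define shrink where "shrink z e = z - e *\<^sub>R (z - c)" for z e
  define \<phi> where "\<phi> e = grad_defect g \<gamma> (L - \<gamma>) (shrink x e) (shrink y e) (p - q)" for e
  have shrink_in: "shrink z e \<in> X" if "z \<in> X" "e \<in> {0..1}" for z e
  proof -
    have "(1 - e) *\<^sub>R z + e *\<^sub>R c \<in> X"
      using convexD_alt[OF \<open>convex X\<close> that(1)] c rel_interior_subset that(2) by auto
    then show ?thesis
      by (simp add: shrink_def algebra_simps)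
  qed
  have "\<phi> e \<le> 0" if "e \<in> {0<..1}" for e
  proof -
    have "shrink z e \<in> rel_interior X" if "z \<in> X" for z
      unfolding shrink_def
      by (rule rel_interior_closure_convex_shrink[OF \<open>convex X\<close> c])
        (use closure_subset that \<open>e \<in> {0<..1}\<close> in auto)
    then obtain rx ry where "rx > 0" "ry > 0"
      and room_x: "\<And>s. \<bar>s\<bar> * norm (p - q) < rx \<Longrightarrow> shrink x e + s *\<^sub>R (p - q) \<in> X"
      and room_y: "\<And>s. \<bar>s\<bar> * norm (p - q) < ry \<Longrightarrow> shrink y e + s *\<^sub>R (p - q) \<in> X"
      using rel_interior_room_along[OF _ p q] x y by metis
    show ?thesis
      unfolding \<phi>_def
    proof (rule grad_defect_nonpos_with_room[OF grad smooth \<open>convex X\<close> sc, of "min rx ry"])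
      show "0 < min rx ry"
        using \<open>rx > 0\<close> \<open>ry > 0\<close> by simp
      show "shrink x e + s *\<^sub>R (p - q) \<in> X \<and> shrink y e + s *\<^sub>R (p - q) \<in> X"
        if "\<bar>s\<bar> * norm (p - q) < min rx ry" for s
        using room_x room_y that by simp
    qed
  qed
  moreover have "continuous_on {0..1} \<phi>"
  proof -
    have shrink_cont: "continuous_on {0..1} (shrink z)" for z
      unfolding shrink_def by (intro continuous_intros)
    have "continuous_on {0..1} (\<lambda>e. g (shrink z e))" if "z \<in> X" for z
      by (rule continuous_on_compose2[OF L_smooth_on_continuous_on[OF smooth] shrink_cont])
        (use shrink_in[OF that] in blast)
    with x y show ?thesis
      unfolding \<phi>_def grad_defect_def by (intro continuous_intros shrink_cont) auto
  qed
  ultimately have "\<phi> 0 \<le> 0"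
    using continuous_le_on_closure[of "{0<..1}" \<phi> 0 0] by simp
  then show ?thesis
    by (simp add: \<phi>_def shrink_def)
qed

lemma gradient_step_contraction:
  fixes f :: "'a::euclidean_space \<Rightarrow> real"
  assumes grad: "is_gradient f g" and smooth: "L_smooth_on L X g" and "convex X"
    and sc: "strongly_convex_on \<gamma> X f g" and "\<gamma> \<le> L" and "0 < \<alpha>"
    and x: "x \<in> X" and y: "y \<in> X" and p: "p \<in> X" and q: "q \<in> X"
  shows "((x - y) - \<alpha> *\<^sub>R (g x - g y)) \<bullet> (p - q)
    \<le> max \<bar>1 - \<alpha> * \<gamma>\<bar> \<bar>1 - \<alpha> * L\<bar> * norm (x - y) * norm (p - q)"
proof -
  define U where "U = (g x - \<gamma> *\<^sub>R x) - (g y - \<gamma> *\<^sub>R y)"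
  define a where "a = (x - y) \<bullet> (p - q)"
  define N where "N = norm (x - y) * norm (p - q)"
  define K where "K = L - \<gamma>"
  define B where "B = \<alpha> * K / 2"
  define A where "A = 1 - \<alpha> * \<gamma> - B"
  have "grad_defect g \<gamma> K x y (q - p) \<le> 0"
    unfolding K_def by (rule grad_defect_nonpos[OF grad smooth \<open>convex X\<close> sc x y q p])
  then have "- (U \<bullet> (p - q)) \<le> K / 2 * (N - a)"
    unfolding grad_defect_def U_def[symmetric] a_def N_def minus_diff_eq[of p q, symmetric]
    by (simp add: inner_minus_right norm_minus_commute[of q p] algebra_simps)
  then have "\<alpha> * (- (U \<bullet> (p - q))) \<le> \<alpha> * (K / 2 * (N - a))"
    by (rule mult_left_mono) (use \<open>0 < \<alpha>\<close> in simp)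
  moreover have "((x - y) - \<alpha> *\<^sub>R (g x - g y)) \<bullet> (p - q) = (1 - \<alpha> * \<gamma>) * a - \<alpha> * (U \<bullet> (p - q))"
    unfolding U_def a_def by (simp add: inner_simps algebra_simps)
  ultimately have "((x - y) - \<alpha> *\<^sub>R (g x - g y)) \<bullet> (p - q) \<le> (1 - \<alpha> * \<gamma>) * a + \<alpha> * (K / 2 * (N - a))"
    by simp
  also have "\<dots> = A * a + B * N"
    unfolding A_def B_def by (simp add: field_simps)
  also have "\<dots> \<le> (\<bar>A\<bar> + B) * N"
  proof -
    have "A * a \<le> \<bar>A\<bar> * \<bar>a\<bar>"
      by (simp add: abs_mult[symmetric])
    also have "\<dots> \<le> \<bar>A\<bar> * N"
      unfolding a_def N_def by (intro mult_left_mono Cauchy_Schwarz_ineq2) simp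
    finally show ?thesis
      by (simp add: distrib_right)
  qed
  also have "\<dots> \<le> max \<bar>1 - \<alpha> * \<gamma>\<bar> \<bar>1 - \<alpha> * L\<bar> * N"
  proof (rule mult_right_mono)
    have "1 - \<alpha> * \<gamma> = A + B" "1 - \<alpha> * L = A - B" "0 \<le> B"
      using \<open>\<gamma> \<le> L\<close> \<open>0 < \<alpha>\<close> by (simp_all add: A_def B_def K_def algebra_simps)
    then show "\<bar>A\<bar> + B \<le> max \<bar>1 - \<alpha> * \<gamma>\<bar> \<bar>1 - \<alpha> * L\<bar>"
      by (simp add: abs_if max_def)
  qed (simp add: N_def)
  finally show ?thesis
    unfolding N_def by (simp add: mult.assoc)
qed

lemma projected_gradient_step_bound:
  fixes f :: "'a::euclidean_space \<Rightarrow> real"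
  assumes grad: "is_gradient f g" and smooth: "L_smooth_on L X g" and "convex X"
    and sc: "strongly_convex_on \<gamma> X f g" and "\<gamma> \<le> L" and "0 < \<alpha>"
    and "S \<subseteq> X" and "closed S" and "convex S" and "S \<noteq> {}"
    and min: "is_argmin_on f S xs" and "xp \<in> X"
  shows "norm (closest_point S (xp - \<alpha> *\<^sub>R (g xp + e)) - xs)
    \<le> max \<bar>1 - \<alpha> * \<gamma>\<bar> \<bar>1 - \<alpha> * L\<bar> * norm (xp - xs) + \<alpha> * norm e"
proof -
  define \<rho> where "\<rho> = max \<bar>1 - \<alpha> * \<gamma>\<bar> \<bar>1 - \<alpha> * L\<bar>"
  define z where "z = xp - \<alpha> *\<^sub>R (g xp + e)"
  define c where "c = closest_point S z"
  have "xs \<in> S" "c \<in> S"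
    using min \<open>closed S\<close> \<open>S \<noteq> {}\<close> by (auto simp: is_argmin_on_def c_def closest_point_in_set)
  have "(z - c) \<bullet> (xs - c) \<le> 0"
    unfolding c_def by (rule closest_point_dot[OF \<open>convex S\<close> \<open>closed S\<close> \<open>xs \<in> S\<close>])
  moreover have "0 \<le> (\<alpha> *\<^sub>R g xs) \<bullet> (c - xs)"
    using is_argmin_on_variational_inequality[OF grad \<open>convex S\<close> min \<open>c \<in> S\<close>] \<open>0 < \<alpha>\<close> by simp
  moreover have "((xp - xs) - \<alpha> *\<^sub>R (g xp - g xs)) \<bullet> (c - xs) - (\<alpha> *\<^sub>R e) \<bullet> (c - xs) - (norm (c - xs))\<^sup>2
      = - ((z - c) \<bullet> (xs - c)) + (\<alpha> *\<^sub>R g xs) \<bullet> (c - xs)"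
    unfolding z_def by (simp add: power2_norm_eq_inner inner_simps inner_commute algebra_simps)
  ultimately have "(norm (c - xs))\<^sup>2 \<le> ((xp - xs) - \<alpha> *\<^sub>R (g xp - g xs)) \<bullet> (c - xs) - (\<alpha> *\<^sub>R e) \<bullet> (c - xs)"
    by linarith
  also have "\<dots> \<le> \<rho> * norm (xp - xs) * norm (c - xs) + \<alpha> * norm e * norm (c - xs)"
  proof -
    have "((xp - xs) - \<alpha> *\<^sub>R (g xp - g xs)) \<bullet> (c - xs) \<le> \<rho> * norm (xp - xs) * norm (c - xs)"
      unfolding \<rho>_def using \<open>S \<subseteq> X\<close> \<open>xs \<in> S\<close> \<open>c \<in> S\<close> \<open>xp \<in> X\<close>
      by (intro gradient_step_contraction[OF grad smooth \<open>convex X\<close> sc \<open>\<gamma> \<le> L\<close> \<open>0 < \<alpha>\<close>]) auto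
    moreover have "- ((\<alpha> *\<^sub>R e) \<bullet> (c - xs)) \<le> \<alpha> * norm e * norm (c - xs)"
      using norm_cauchy_schwarz[of "- (\<alpha> *\<^sub>R e)" "c - xs"] \<open>0 < \<alpha>\<close> by simp
    ultimately show ?thesis
      by linarith
  qed
  finally have "norm (c - xs) * norm (c - xs) \<le> (\<rho> * norm (xp - xs) + \<alpha> * norm e) * norm (c - xs)"
    by (simp add: power2_eq_square algebra_simps)
  moreover have "0 \<le> \<rho> * norm (xp - xs) + \<alpha> * norm e"
    using \<open>0 < \<alpha>\<close> by (simp add: \<rho>_def)
  ultimately have "norm (c - xs) \<le> \<rho> * norm (xp - xs) + \<alpha> * norm e"
    by (cases "norm (c - xs) = 0") auto
  then show ?thesis
    unfolding c_def z_def \<rho>_def .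
qed

lemma step_rate_lt_one:
  fixes \<gamma> L \<alpha> :: real
  assumes "0 < \<gamma>" and "\<gamma> \<le> L" and "0 < \<alpha>" and "\<alpha> < 2 / L"
  shows "max \<bar>1 - \<alpha> * \<gamma>\<bar> \<bar>1 - \<alpha> * L\<bar> < 1"
proof -
  have "\<alpha> * L < 2"
    using assms by (simp add: field_simps)
  moreover have "0 < \<alpha> * \<gamma>" "\<alpha> * \<gamma> \<le> \<alpha> * L"
    using assms by simp_all
  ultimately show ?thesis
    by auto
qed

lemma sum_le_of_linear_recursion:
  fixes a b :: "nat \<Rightarrow> real"
  assumes "0 \<le> \<rho>" and "\<rho> < 1" and nonneg: "\<And>t. 0 \<le> a t"
    and rec: "\<And>t. 1 \<le> t \<Longrightarrow> a t \<le> \<rho> * a (t - 1) + b t"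
  shows "(\<Sum>t=1..T. a t) \<le> 1 / (1 - \<rho>) * (\<rho> * a 0 + (\<Sum>t=1..T. b t))"
proof -
  have shift: "(\<Sum>t=1..T. a (t - 1)) = a 0 + (\<Sum>t=1..T. a t) - a T"
    by (induction T) auto
  have "(\<Sum>t=1..T. a t) \<le> (\<Sum>t=1..T. \<rho> * a (t - 1) + b t)"
    using rec by (intro sum_mono) auto
  also have "\<dots> = \<rho> * (\<Sum>t=1..T. a (t - 1)) + (\<Sum>t=1..T. b t)"
    by (simp add: sum.distrib sum_distrib_left)
  also have "\<dots> = \<rho> * (a 0 + (\<Sum>t=1..T. a t) - a T) + (\<Sum>t=1..T. b t)"
    by (simp only: shift)
  finally have "(1 - \<rho>) * (\<Sum>t=1..T. a t) \<le> \<rho> * a 0 + (\<Sum>t=1..T. b t)"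
    using mult_nonneg_nonneg[OF \<open>0 \<le> \<rho>\<close> nonneg[of T]] by (simp add: algebra_simps)
  then show ?thesis
    using \<open>\<rho> < 1\<close> by (simp add: field_simps)
qed

theorem corollary1:
  fixes X :: "(real ^ 'm) set"
    and Xt :: "nat \<Rightarrow> (real ^ 'm) set"
    and f :: "nat \<Rightarrow> real ^ 'm \<Rightarrow> real"
    and g :: "nat \<Rightarrow> real ^ 'm \<Rightarrow> real ^ 'm"
    and xstar x e :: "nat \<Rightarrow> real ^ 'm"
    and \<gamma> L \<alpha> :: real and T :: nat
  assumes "0 < \<gamma>" and "\<gamma> \<le> L"
    and "0 < \<alpha>" and "\<alpha> < 2 / L"
    and "X \<noteq> {}" and "closed X" and "convex X"
    and "\<And>t. Xt t \<noteq> {}" and "\<And>t. closed (Xt t)" and "\<And>t. convex (Xt t)"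
    and "\<And>t. Xt t \<subseteq> X"
    and grad: "\<And>t. is_gradient (f t) (g t)"
    and smooth: "\<And>t. L_smooth_on L X (g t)"
    and sc: "\<And>t. strongly_convex_on \<gamma> X (f t) (g t)"
    and min: "\<And>t. is_argmin_on (f t) (Xt t) (xstar t)"
    and "x 0 \<in> Xt 0"
    and iter: "\<And>t. t \<ge> 1 \<Longrightarrow> x t = closest_point (Xt t) (x (t - 1) - \<alpha> *\<^sub>R (g t (x (t - 1)) + e t))"
    and "T \<ge> 1"
  shows "(\<Sum>t=1..T. norm (x t - xstar t)) \<le>
           1 / (1 - max \<bar>1 - \<alpha> * \<gamma>\<bar> \<bar>1 - \<alpha> * L\<bar>) *
           (max \<bar>1 - \<alpha> * \<gamma>\<bar> \<bar>1 - \<alpha> * L\<bar> * norm (x 0 - xstar 0)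
            + max \<bar>1 - \<alpha> * \<gamma>\<bar> \<bar>1 - \<alpha> * L\<bar> * (\<Sum>t=1..T. norm (xstar (t - 1) - xstar t))
            + \<alpha> * (\<Sum>t=1..T. norm (e t)))"
proof -
  define \<rho> where "\<rho> = max \<bar>1 - \<alpha> * \<gamma>\<bar> \<bar>1 - \<alpha> * L\<bar>"
  have x_in: "x t \<in> Xt t" for t
    using \<open>x 0 \<in> Xt 0\<close> iter[of t] closest_point_in_set[OF \<open>closed (Xt t)\<close> \<open>Xt t \<noteq> {}\<close>]
    by (cases "t = 0") auto
  have "norm (x t - xstar t) \<le> \<rho> * norm (x (t - 1) - xstar (t - 1))
      + (\<rho> * norm (xstar (t - 1) - xstar t) + \<alpha> * norm (e t))" if "t \<ge> 1" for t
  proof -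
    have "norm (x t - xstar t) \<le> \<rho> * norm (x (t - 1) - xstar t) + \<alpha> * norm (e t)"
      unfolding iter[OF that] \<rho>_def
      using x_in[of "t - 1"] \<open>Xt (t - 1) \<subseteq> X\<close>
      by (intro projected_gradient_step_bound[OF grad smooth \<open>convex X\<close> sc \<open>\<gamma> \<le> L\<close> \<open>0 < \<alpha>\<close>
            \<open>Xt t \<subseteq> X\<close> \<open>closed (Xt t)\<close> \<open>convex (Xt t)\<close> \<open>Xt t \<noteq> {}\<close> min]) auto
    also have "\<dots> \<le> \<rho> * (norm (x (t - 1) - xstar (t - 1)) + norm (xstar (t - 1) - xstar t)) + \<alpha> * norm (e t)"
      by (intro add_right_mono mult_left_mono norm_diff_triangle_le[OF order_refl order_refl])
        (simp add: \<rho>_def)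
    finally show ?thesis
      by (simp add: algebra_simps)
  qed
  then have "(\<Sum>t=1..T. norm (x t - xstar t)) \<le> 1 / (1 - \<rho>) * (\<rho> * norm (x 0 - xstar 0)
      + (\<Sum>t=1..T. \<rho> * norm (xstar (t - 1) - xstar t) + \<alpha> * norm (e t)))"
    using step_rate_lt_one[OF \<open>0 < \<gamma>\<close> \<open>\<gamma> \<le> L\<close> \<open>0 < \<alpha>\<close> \<open>\<alpha> < 2 / L\<close>] unfolding \<rho>_def
    by (intro sum_le_of_linear_recursion) auto
  then show ?thesis
    unfolding \<rho>_def by (simp add: sum.distrib sum_distrib_left add.assoc)
qed

end
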